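(* For all integers $n\geq1$, $$\sum_{k=1}^{n}t^{2(n-k)}\left(\frac{\{k+1\}_{s,t}+t\{k-1\}_{s,t}}{s}\right)\{k\}_{s,t}^3=\left\{{n+1\atop 2}\right\}_{s,t}^2=\left(\sum_{k=1}^{n}\varphi^{2(n-k)}\varphi'^{\,k-1}\{k\}_{s,t}\right)^2.$$
   Context: Let $s,t$ be nonzero reals with $s^2+4t\neq0$; $\varphi=\frac{s+\sqrt{s^2+4t}}{2}$, $\varphi'=\frac{s-\sqrt{s^2+4t}}{2}$. Generalized Fibonacci polynomials: $\{0\}_{s,t}=0$, $\{1\}_{s,t}=1$, $\{n+2\}_{s,t}=s\{n+1\}_{s,t}+t\{n\}_{s,t}$ (so $\{n\}_{s,t}=\frac{\varphi^n-\varphi'^n}{\varphi-\varphi'}$). The generalized triangular numbers are $\left\{{n+1\atop 2}\right\}_{s,t}=\frac{\{n\}_{s,t}\{n+1\}_{s,t}}{s}$. *)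

theory Defs
  imports Complex_Main
begin

fun gfib :: "real \<Rightarrow> real \<Rightarrow> nat \<Rightarrow> real" where
  "gfib s t 0 = 0"
| "gfib s t (Suc 0) = 1"
| "gfib s t (Suc (Suc n)) = s * gfib s t (Suc n) + t * gfib s t n"

text \<open>Generalized triangular number {n+1 choose 2}_{s,t} = {n}{n+1}/s.\<close>
definition gtri :: "real \<Rightarrow> real \<Rightarrow> nat \<Rightarrow> real" where
  "gtri s t n = gfib s t n * gfib s t (Suc n) / s"

text \<open>Roots phi, phi' of x^2 = s x + t, taken in the complex numbers
  (s^2 + 4t may be negative).\<close>
definition gphi :: "real \<Rightarrow> real \<Rightarrow> complex" where
  "gphi s t = (complex_of_real s + csqrt (complex_of_real (s^2 + 4*t))) / 2"

definition gphi' :: "real \<Rightarrow> real \<Rightarrow> complex" where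
  "gphi' s t = (complex_of_real s - csqrt (complex_of_real (s^2 + 4*t))) / 2"

end

theory Submission
  imports Defs
begin

text \<open>Both sums have the shape \<open>S n = (\<Sum>k=1..n. c^(n-k) * g k)\<close>, so \<open>S (n+1) = c * S n + g (n+1)\<close>
  and each equality follows by induction on \<open>n\<close> from a one-step identity for the triangular
  numbers \<open>T n = {n}{n+1}/s\<close>. For the squared sum, \<open>T (n+1)^2 = t^2 T n^2 + (({n+2} + t{n})/s) {n+1}^3\<close>
  is a rational identity implied by the recurrence. For the sum over the roots,
  \<open>T (n+1) = \<phi>^2 T n + \<phi>'^n {n+1}\<close> reduces to \<open>{n+2} = \<phi>^2 {n} + s \<phi>'^n\<close>; both sides of the latter
  satisfy the recurrence \<open>x (m+2) = s x (m+1) + t x m\<close> (because \<open>\<phi>'^2 = s \<phi>' + t\<close>) and agree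
  for \<open>n = 0, 1\<close>.\<close>

lemma sum_power_weighted_Suc:
  fixes g :: "nat \<Rightarrow> 'a::comm_semiring_1"
  shows "(\<Sum>k=1..Suc n. c^(Suc n - k) * g k) = c * (\<Sum>k=1..n. c^(n - k) * g k) + g (Suc n)"
proof -
  have "(\<Sum>k=1..n. c^(Suc n - k) * g k) = (\<Sum>k=1..n. c * (c^(n - k) * g k))"
    by (intro sum.cong) (auto simp: Suc_diff_le mult.assoc)
  then show ?thesis
    by (simp add: sum_distrib_left)
qed

lemma linear_recurrence2_unique:
  fixes u v :: "nat \<Rightarrow> 'a::comm_ring"
  assumes "\<And>m. u (Suc (Suc m)) = a * u (Suc m) + b * u m"
    and "\<And>m. v (Suc (Suc m)) = a * v (Suc m) + b * v m"
    and "u 0 = v 0" and "u 1 = v 1"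
  shows "u m = v m"
proof -
  have "u m = v m \<and> u (Suc m) = v (Suc m)"
    by (induction m) (use assms in auto)
  then show ?thesis ..
qed

lemma gtri_0 [simp]: "gtri s t 0 = 0"
  by (simp add: gtri_def)

lemma gtri_Suc_square:
  assumes "s \<noteq> 0"
  shows "(gtri s t (Suc n))^2
    = t^2 * (gtri s t n)^2 + (gfib s t (n+2) + t * gfib s t n) / s * (gfib s t (Suc n))^3"
  using assms by (simp add: gtri_def field_simps power2_eq_square power3_eq_cube)

lemma sum_gtri_square:
  assumes "s \<noteq> 0"
  shows "(\<Sum>k=1..n. (t^2)^(n-k) * ((gfib s t (k+1) + t * gfib s t (k-1)) / s * (gfib s t k)^3))
    = (gtri s t n)^2"
proof (induction n)
  case (Suc n)
  then show ?case
    unfolding sum_power_weighted_Suc by (simp add: gtri_Suc_square assms)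
qed simp

lemma gphi_square: "(gphi s t)^2 = complex_of_real s * gphi s t + complex_of_real t"
  using power2_csqrt[of "complex_of_real (s^2 + 4*t)"]
  by (simp add: gphi_def power2_eq_square field_simps)

lemma gphi'_square: "(gphi' s t)^2 = complex_of_real s * gphi' s t + complex_of_real t"
  using power2_csqrt[of "complex_of_real (s^2 + 4*t)"]
  by (simp add: gphi'_def power2_eq_square field_simps)

lemma gphi_add_gphi': "gphi s t + gphi' s t = complex_of_real s"
  by (simp add: gphi_def gphi'_def field_simps)

lemma gfib_Suc_Suc_gphi:
  "complex_of_real (gfib s t (n+2))
    = (gphi s t)^2 * complex_of_real (gfib s t n) + complex_of_real s * (gphi' s t)^n"
proof -
  let ?p = "gphi s t" and ?q = "gphi' s t" and ?s = "complex_of_real s" and ?t = "complex_of_real t"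
  let ?u = "\<lambda>m. complex_of_real (gfib s t (m+2)) - ?p^2 * complex_of_real (gfib s t m)"
  let ?v = "\<lambda>m. ?s * ?q^m"
  have "?u m = ?v m" for m
  proof (rule linear_recurrence2_unique[where a = ?s and b = ?t])
    show "?u (Suc (Suc m)) = ?s * ?u (Suc m) + ?t * ?u m" for m
      by (simp add: numeral_2_eq_2 algebra_simps)
    show "?v (Suc (Suc m)) = ?s * ?v (Suc m) + ?t * ?v m" for m
    proof -
      have "?v (Suc (Suc m)) = ?s * ?q^m * ?q^2"
        by (simp add: power2_eq_square algebra_simps)
      then show ?thesis
        by (simp add: gphi'_square algebra_simps)
    qed
    show "?u 0 = ?v 0"
      by (simp add: numeral_2_eq_2)
    show "?u 1 = ?v 1"
    proof -
      have u1: "?u 1 = ?s * (?s - ?p)"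
        using gphi_square[of s t] by (simp add: numeral_2_eq_2 power2_eq_square algebra_simps)
      have "?s - ?p = ?q"
        using gphi_add_gphi'[of s t] by (simp add: algebra_simps)
      with u1 show ?thesis
        by (simp only: power_one_right)
    qed
  qed
  then show ?thesis
    by (simp add: algebra_simps)
qed

lemma gtri_Suc_gphi:
  assumes "s \<noteq> 0"
  shows "complex_of_real (gtri s t (Suc n))
    = (gphi s t)^2 * complex_of_real (gtri s t n) + (gphi' s t)^n * complex_of_real (gfib s t (Suc n))"
proof -
  have "complex_of_real (gtri s t (Suc n))
      = complex_of_real (gfib s t (Suc n)) * complex_of_real (gfib s t (n+2)) / complex_of_real s"
    by (simp add: gtri_def)
  also have "\<dots> = complex_of_real (gfib s t (Suc n))
      * ((gphi s t)^2 * complex_of_real (gfib s t n) + complex_of_real s * (gphi' s t)^n)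
      / complex_of_real s"
    by (simp only: gfib_Suc_Suc_gphi)
  finally show ?thesis
    using assms by (simp add: gtri_def field_simps)
qed

lemma sum_gphi_gfib_eq_gtri:
  assumes "s \<noteq> 0"
  shows "(\<Sum>k=1..n. ((gphi s t)^2)^(n-k) * ((gphi' s t)^(k-1) * complex_of_real (gfib s t k)))
    = complex_of_real (gtri s t n)"
proof (induction n)
  case (Suc n)
  then show ?case
    unfolding sum_power_weighted_Suc by (simp add: gtri_Suc_gphi assms)
qed simp

theorem mainTheorem13:
  fixes s t :: real and n :: nat
  assumes "s \<noteq> 0" and "t \<noteq> 0" and "s^2 + 4*t \<noteq> 0" and "n \<ge> 1"
  shows "(\<Sum>k=1..n. t^(2*(n-k)) * ((gfib s t (k+1) + t * gfib s t (k-1)) / s) * (gfib s t k)^3)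
           = (gtri s t n)^2
       \<and> complex_of_real ((gtri s t n)^2)
           = (\<Sum>k=1..n. (gphi s t)^(2*(n-k)) * (gphi' s t)^(k-1) * complex_of_real (gfib s t k))^2"
  using sum_gtri_square[OF assms(1), of t n] sum_gphi_gfib_eq_gtri[OF assms(1), of t n]
  by (simp add: power_mult mult.assoc)

end
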